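(* Let $n=n_1+\dots+n_k=p+q$ with positive integers, let $G=U(n)$, let $L=U(n_1)\times\cdots\times U(n_k)$ and $H=U(p)\times U(q)$ be the natural block-diagonal subgroups of $G$, and let $G'=O(n)$. If $\min(p,q)\ge 3$ and $k\ge 4$, then $LG'H\subsetneq G$.
   Context: $LG'H=\{xyz:x\in L,y\in G',z\in H\}$. *)

theory Defs
  imports Complex_Main "Jordan_Normal_Form.Matrix"
begin

definition cadj :: "complex mat \<Rightarrow> complex mat" where
  "cadj A = transpose_mat (map_mat cnj A)"

definition unitary_group :: "nat \<Rightarrow> complex mat set" where
  "unitary_group n = {U \<in> carrier_mat n n. cadj U * U = 1\<^sub>m n \<and> U * cadj U = 1\<^sub>m n}"

definition orthogonal_group :: "nat \<Rightarrow> complex mat set" where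
  "orthogonal_group n = {map_mat complex_of_real R | R.
      R \<in> carrier_mat n n \<and> transpose_mat R * R = 1\<^sub>m n \<and> R * transpose_mat R = 1\<^sub>m n}"

definition block_unitary_group :: "nat list \<Rightarrow> complex mat set" where
  "block_unitary_group ns = {diag_block_mat Us | Us.
      length Us = length ns \<and> (\<forall>i < length ns. Us ! i \<in> unitary_group (ns ! i))}"

definition triple_prod :: "complex mat set \<Rightarrow> complex mat set \<Rightarrow> complex mat set \<Rightarrow> complex mat set" where
  "triple_prod A B C = {a * b * c | a b c. a \<in> A \<and> b \<in> B \<and> c \<in> C}"

end

theory Submission
  imports Defs "Jordan_Normal_Form.Determinant"
begin

text \<open>
  For \<open>g \<in> U(n)\<close> let \<open>P = g E g\<^sup>*\<close>, where \<open>E\<close> projects onto the first \<open>p\<close>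
  coordinates, and for three blocks of the composition \<open>n = n\<^sub>1 + \<dots> + n\<^sub>k\<close>, with coordinate
  projections \<open>D\<^sub>1, D\<^sub>2, D\<^sub>3\<close>, put \<open>t(g) = tr (D\<^sub>1 P D\<^sub>2 P D\<^sub>3 P)\<close>.
  Right multiplication by \<open>H\<close> does not change \<open>P\<close>, and left multiplication by \<open>l \<in> L\<close>
  conjugates \<open>P\<close> by a unitary commuting with every \<open>D\<^sub>i\<close>; so \<open>t\<close> is constant on the
  double cosets \<open>L g H\<close>, and it is real on \<open>O(n)\<close>. Hence \<open>t\<close> is real on \<open>L O(n) H\<close>.

  Conversely, plant a small unitary \<open>u\<close> (of size 4 or 5) on coordinates \<open>x\<^sub>0, x\<^sub>1, x\<^sub>2\<close>
  lying in the three blocks and one or two further coordinates outside them, and act as the identity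
  elsewhere. For the resulting \<open>g\<close>, \<open>t(g)\<close> is the product \<open>R\<^sub>0\<^sub>1 R\<^sub>1\<^sub>2 R\<^sub>2\<^sub>0\<close> of entries
  of \<open>R = u E' u\<^sup>*\<close>, where \<open>E'\<close> marks the planted coordinates below \<open>p\<close>, and explicit
  choices of \<open>u\<close> make it non-real. Depending on where \<open>p\<close> falls relative to the first and the
  last block, the hypotheses on \<open>p\<close>, \<open>q\<close> and \<open>k\<close> leave room for such coordinates.
\<close>

lemma cadj_carrier [simp]: "A \<in> carrier_mat n m \<Longrightarrow> cadj A \<in> carrier_mat m n"
  and cadj_dim [simp]: "dim_row (cadj A) = dim_col A" "dim_col (cadj A) = dim_row A"
  by (auto simp: cadj_def)

lemma cadj_index [simp]: "i < dim_col A \<Longrightarrow> j < dim_row A \<Longrightarrow> cadj A $$ (i, j) = cnj (A $$ (j, i))"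
  by (simp add: cadj_def)

lemma cadj_mult:
  assumes "A \<in> carrier_mat n m" "B \<in> carrier_mat m k"
  shows "cadj (A * B) = cadj B * cadj A"
  by (rule eq_matI) (use assms in \<open>auto simp: scalar_prod_def mult.commute\<close>)

lemma cadj_of_real: "cadj (map_mat of_real R) = map_mat of_real (transpose_mat R)"
  by (rule eq_matI) auto

(* Unlike mult_carrier_mat, usable by the simplifier: no dimension occurs only in the premises. *)
lemma mult_carrier_mat_square [simp]:
  "A \<in> carrier_mat n n \<Longrightarrow> B \<in> carrier_mat n n \<Longrightarrow> A * B \<in> carrier_mat n n"
  by (rule mult_carrier_mat)

lemma unitary_groupD:
  assumes "U \<in> unitary_group n"
  shows "U \<in> carrier_mat n n" "cadj U * U = 1\<^sub>m n" "U * cadj U = 1\<^sub>m n"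
  using assms by (auto simp: unitary_group_def)

lemma unitary_groupI:
  assumes "U \<in> carrier_mat n n" "U * cadj U = 1\<^sub>m n"
  shows "U \<in> unitary_group n"
  using assms mat_mult_left_right_inverse[of U n "cadj U"] by (auto simp: unitary_group_def)

lemma unitary_cadj_mult_cancel:
  assumes "U \<in> unitary_group n" "A \<in> carrier_mat n k"
  shows "cadj U * (U * A) = A"
  using assms unitary_groupD[OF assms(1)]
  by (simp flip: assoc_mult_mat[of "cadj U" n n U n A k])

lemma unitary_mult_cadj_cancel:
  assumes "U \<in> unitary_group n" "A \<in> carrier_mat n k"
  shows "U * (cadj U * A) = A"
  using assms unitary_groupD[OF assms(1)]
  by (simp flip: assoc_mult_mat[of U n n "cadj U" n A k])

lemma unitary_group_mult:
  assumes "A \<in> unitary_group n" "B \<in> unitary_group n"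
  shows "A * B \<in> unitary_group n"
proof (rule unitary_groupI)
  note A = unitary_groupD[OF assms(1)] and B = unitary_groupD[OF assms(2)]
  show "A * B \<in> carrier_mat n n"
    using A B by simp
  have "(A * B) * cadj (A * B) = A * (B * (cadj B * cadj A))"
    using A B by (simp add: cadj_mult[of A n n B n] assoc_mult_mat[of A n n B n _ n])
  then show "(A * B) * cadj (A * B) = 1\<^sub>m n"
    using A B by (simp add: unitary_mult_cadj_cancel[OF assms(2), of "cadj A" n])
qed

lemma triple_prod_subset:
  assumes "A \<subseteq> unitary_group n" "B \<subseteq> unitary_group n" "C \<subseteq> unitary_group n"
  shows "triple_prod A B C \<subseteq> unitary_group n"
  using assms by (auto simp: triple_prod_def intro!: unitary_group_mult)

lemma four_block_mat_unitary_group: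
  assumes A: "A \<in> unitary_group n1" and B: "B \<in> unitary_group n2"
  shows "four_block_mat A (0\<^sub>m n1 n2) (0\<^sub>m n2 n1) B \<in> unitary_group (n1 + n2)"
proof (rule unitary_groupI)
  note A = unitary_groupD[OF A] and B = unitary_groupD[OF B]
  have "cadj (four_block_mat A (0\<^sub>m n1 n2) (0\<^sub>m n2 n1) B)
      = four_block_mat (cadj A) (0\<^sub>m n1 n2) (0\<^sub>m n2 n1) (cadj B)"
    by (rule eq_matI) (use A B in auto)
  then show "four_block_mat A (0\<^sub>m n1 n2) (0\<^sub>m n2 n1) B * cadj (four_block_mat A (0\<^sub>m n1 n2) (0\<^sub>m n2 n1) B)
      = 1\<^sub>m (n1 + n2)"
    using A B by (simp add: mult_four_block_mat[of _ n1 n1 _ n2 _ n2 _ _ n1 _ n2])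
qed (use unitary_groupD[OF A] unitary_groupD[OF B] in simp)

lemma diag_block_mat_unitary_group:
  "list_all2 (\<lambda>U k. U \<in> unitary_group k) Us ns \<Longrightarrow> diag_block_mat Us \<in> unitary_group (sum_list ns)"
proof (induction Us arbitrary: ns)
  case Nil
  then show ?case
    by (auto simp: unitary_group_def)
next
  case (Cons A As)
  then obtain k ks where ns: "ns = k # ks" and A: "A \<in> unitary_group k"
    and As: "diag_block_mat As \<in> unitary_group (sum_list ks)"
    by (auto simp: list_all2_Cons1)
  have "dim_row A = k" "dim_col A = k"
    "dim_row (diag_block_mat As) = sum_list ks" "dim_col (diag_block_mat As) = sum_list ks"
    using unitary_groupD(1)[OF A] unitary_groupD(1)[OF As] by auto
  then show ?case
    using four_block_mat_unitary_group[OF A As] by (simp add: ns Let_def)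
qed

lemma block_unitary_group_subset: "block_unitary_group ns \<subseteq> unitary_group (sum_list ns)"
  by (auto simp: block_unitary_group_def list_all2_conv_all_nth intro!: diag_block_mat_unitary_group)

lemma orthogonal_group_subset: "orthogonal_group n \<subseteq> unitary_group n"
proof
  fix M assume "M \<in> orthogonal_group n"
  then obtain R where M: "M = map_mat complex_of_real R"
    and R: "R \<in> carrier_mat n n" "R * transpose_mat R = 1\<^sub>m n"
    by (auto simp: orthogonal_group_def)
  have "M * cadj M = map_mat of_real (R * transpose_mat R)"
    unfolding M cadj_of_real by (rule of_real_hom.mat_hom_mult[symmetric]) (use R in auto)
  also have "\<dots> = 1\<^sub>m n"
    using R by (simp add: of_real_hom.mat_hom_one)
  finally show "M \<in> unitary_group n"
    using R by (intro unitary_groupI) (auto simp: M)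
qed

definition coord_proj :: "nat \<Rightarrow> nat set \<Rightarrow> 'a :: zero_neq_one mat" where
  "coord_proj n X = mat n n (\<lambda>(i, j). of_bool (i = j \<and> i \<in> X))"

lemma coord_proj_carrier [simp]: "coord_proj n X \<in> carrier_mat n n"
  and coord_proj_dim [simp]: "dim_row (coord_proj n X) = n" "dim_col (coord_proj n X) = n"
  by (auto simp: coord_proj_def)

lemma of_real_coord_proj [simp]: "map_mat of_real (coord_proj n X) = coord_proj n X"
  by (rule eq_matI) (auto simp: coord_proj_def)

lemma coord_proj_mult_index:
  fixes A :: "'a :: semiring_1 mat"
  assumes "A \<in> carrier_mat n m" "i < n" "j < m"
  shows "(coord_proj n X * A) $$ (i, j) = (if i \<in> X then A $$ (i, j) else 0)"
proof -
  have "{0..<n} \<inter> {k. i = k \<and> i \<in> X} = (if i \<in> X then {i} else {})"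
    using assms by auto
  then show ?thesis
    using assms by (simp add: coord_proj_def scalar_prod_def)
qed

lemma mult_coord_proj_index:
  fixes A :: "'a :: semiring_1 mat"
  assumes "A \<in> carrier_mat m n" "i < m" "j < n"
  shows "(A * coord_proj n X) $$ (i, j) = (if j \<in> X then A $$ (i, j) else 0)"
proof -
  have "{0..<n} \<inter> {k. k = j \<and> k \<in> X} = (if j \<in> X then {j} else {})"
    using assms by auto
  then show ?thesis
    using assms by (simp add: coord_proj_def scalar_prod_def)
qed

lemma coord_proj_commute:
  fixes A :: "'a :: semiring_1 mat"
  assumes A: "A \<in> carrier_mat n n"
    and zero: "\<And>x y. x < n \<Longrightarrow> y < n \<Longrightarrow> (x \<in> X) \<noteq> (y \<in> X) \<Longrightarrow> A $$ (x, y) = 0"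
  shows "coord_proj n X * A = A * coord_proj n X"
proof (rule eq_matI)
  fix x y assume "x < dim_row (A * coord_proj n X)" "y < dim_col (A * coord_proj n X)"
  then have xy: "x < n" "y < n"
    using A by auto
  show "(coord_proj n X * A) $$ (x, y) = (A * coord_proj n X) $$ (x, y)"
    using coord_proj_mult_index[OF A xy] mult_coord_proj_index[OF A xy] zero[OF xy] by auto
qed (use A in auto)

definition block_start :: "nat list \<Rightarrow> nat \<Rightarrow> nat" where
  "block_start ns i = sum_list (take i ns)"

definition block_range :: "nat list \<Rightarrow> nat \<Rightarrow> nat set" where
  "block_range ns i = {block_start ns i..<block_start ns (Suc i)}"

lemma block_start_0 [simp]: "block_start ns 0 = 0"
  and block_start_Cons_Suc [simp]: "block_start (k # ns) (Suc i) = k + block_start ns i"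
  by (simp_all add: block_start_def)

lemma block_start_Suc: "i < length ns \<Longrightarrow> block_start ns (Suc i) = block_start ns i + ns ! i"
  by (simp add: block_start_def take_Suc_conv_app_nth)

lemma block_start_mono: "i \<le> j \<Longrightarrow> block_start ns i \<le> block_start ns j"
proof -
  assume "i \<le> j"
  then have "take j ns = take i ns @ take (j - i) (drop i ns)"
    by (metis le_add_diff_inverse take_add)
  then show ?thesis
    by (simp add: block_start_def)
qed

lemma block_start_le_sum_list: "block_start ns i \<le> sum_list ns"
  by (metis block_start_def block_start_mono nat_le_linear take_all_iff)

lemma block_start_length: "block_start ns (length ns) = sum_list ns"
  by (simp add: block_start_def)

lemma block_start_strict_mono:
  assumes "\<forall>i < length ns. ns ! i > 0" "i < j" "j \<le> length ns"
  shows "block_start ns i < block_start ns j"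
proof -
  have i: "i < length ns" "0 < ns ! i"
    using assms by auto
  have "block_start ns (Suc i) \<le> block_start ns j"
    using assms(2) by (intro block_start_mono) simp
  then show ?thesis
    using i block_start_Suc[OF i(1)] by linarith
qed

lemma diag_block_mat_carrier:
  "list_all2 (\<lambda>U k. U \<in> carrier_mat k k) Us ns
    \<Longrightarrow> diag_block_mat Us \<in> carrier_mat (sum_list ns) (sum_list ns)"
  by (induction rule: list_all2_induct) (auto simp: Let_def)

lemma diag_block_mat_index_zero:
  assumes "list_all2 (\<lambda>U k. U \<in> carrier_mat k k) Us ns"
    and "x \<in> block_range ns i" "y \<notin> block_range ns i" "y < sum_list ns"
  shows "diag_block_mat Us $$ (x, y) = 0 \<and> diag_block_mat Us $$ (y, x) = 0"
  using assms
proof (induction Us arbitrary: ns i x y)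
  case Nil
  then show ?case
    by (simp add: block_range_def block_start_def)
next
  case (Cons A As)
  then obtain k ks where ns: "ns = k # ks" and A: "A \<in> carrier_mat k k"
    and As: "list_all2 (\<lambda>U k. U \<in> carrier_mat k k) As ks"
    by (auto simp: list_all2_Cons1)
  have B: "diag_block_mat As \<in> carrier_mat (sum_list ks) (sum_list ks)"
    using As by (rule diag_block_mat_carrier)
  have block: "diag_block_mat (A # As)
      = four_block_mat A (0\<^sub>m k (sum_list ks)) (0\<^sub>m (sum_list ks) k) (diag_block_mat As)"
    using A B by (simp add: Let_def)
  have x: "x < k + sum_list ks"
    using Cons.prems(2) block_start_le_sum_list[of ns "Suc i"] ns by (simp add: block_range_def)
  have y: "y < k + sum_list ks"
    using Cons.prems(4) ns by simp
  show ?case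
  proof (cases i)
    case 0
    then have "x < k" "k \<le> y"
      using Cons.prems(2,3) by (simp_all add: ns block_range_def)
    then show ?thesis
      using A B x y by (simp add: block)
  next
    case (Suc i')
    then have x': "k \<le> x" "x - k \<in> block_range ks i'"
      using Cons.prems(2) by (auto simp: ns block_range_def)
    show ?thesis
    proof (cases "y < k")
      case False
      then have "y - k \<notin> block_range ks i'" "y - k < sum_list ks"
        using Cons.prems(3) y by (auto simp: ns Suc block_range_def)
      then have "diag_block_mat As $$ (x - k, y - k) = 0 \<and> diag_block_mat As $$ (y - k, x - k) = 0"
        using Cons.IH[OF As x'(2)] by blast
      then show ?thesis
        using A B x y x' False by (simp add: block)
    qed (use A B x y x' in \<open>simp add: block\<close>)
  qed
qed

lemma block_unitary_group_commute:
  assumes "l \<in> block_unitary_group ns"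
  shows "coord_proj (sum_list ns) (block_range ns i) * l = l * coord_proj (sum_list ns) (block_range ns i)"
proof (rule coord_proj_commute)
  obtain Us where l: "l = diag_block_mat Us" and Us: "list_all2 (\<lambda>U k. U \<in> unitary_group k) Us ns"
    using assms by (auto simp: block_unitary_group_def list_all2_conv_all_nth)
  have carrier: "list_all2 (\<lambda>U k. U \<in> carrier_mat k k) Us ns"
    using Us by (rule list_all2_mono) (simp add: unitary_group_def)
  then show "l \<in> carrier_mat (sum_list ns) (sum_list ns)"
    unfolding l by (rule diag_block_mat_carrier)
  show "l $$ (x, y) = 0" if "x < sum_list ns" "y < sum_list ns"
      "(x \<in> block_range ns i) \<noteq> (y \<in> block_range ns i)" for x y
    using diag_block_mat_index_zero[OF carrier] that unfolding l by (cases "x \<in> block_range ns i") blast+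
qed

section \<open>A trace invariant of the double cosets\<close>

lemma index_mult_mat_sum:
  assumes "A \<in> carrier_mat n m" "B \<in> carrier_mat m k" "i < n" "j < k"
  shows "(A * B) $$ (i, j) = (\<Sum>l<m. A $$ (i, l) * B $$ (l, j))"
  using assms by (simp add: scalar_prod_def atLeast0LessThan)

definition trace :: "'a :: comm_semiring_0 mat \<Rightarrow> 'a" where
  "trace A = (\<Sum>i<dim_row A. A $$ (i, i))"

lemma trace_mult:
  assumes "A \<in> carrier_mat n m" "B \<in> carrier_mat m n"
  shows "trace (A * B) = (\<Sum>i<n. \<Sum>k<m. A $$ (i, k) * B $$ (k, i))"
  using assms by (simp add: trace_def scalar_prod_def atLeast0LessThan)

lemma trace_mult_comm:
  assumes "A \<in> carrier_mat n m" "B \<in> carrier_mat m n"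
  shows "trace (A * B) = trace (B * A)"
  unfolding trace_mult[OF assms] trace_mult[OF assms(2,1)]
  by (subst sum.swap) (simp add: mult.commute)

lemma trace_of_real: "A \<in> carrier_mat n n \<Longrightarrow> trace (map_mat of_real A) = of_real (trace A)"
  by (simp add: trace_def)

lemma trace_unitary_conj:
  assumes "U \<in> unitary_group n" "A \<in> carrier_mat n n"
  shows "trace (U * A * cadj U) = trace A"
  using trace_mult_comm[of "U * A" n n "cadj U"] unitary_cadj_mult_cancel[OF assms]
    unitary_groupD(1)[OF assms(1)] assms(2)
  by simp

lemma unitary_conj_mult:
  assumes U: "U \<in> unitary_group n" and "A \<in> carrier_mat n n" "B \<in> carrier_mat n n"
  shows "(U * A * cadj U) * (U * B * cadj U) = U * (A * B) * cadj U"
proof -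
  have carrier: "U \<in> carrier_mat n n" "cadj U \<in> carrier_mat n n"
    using unitary_groupD(1)[OF U] by auto
  note square = assoc_mult_mat[of _ n n _ n _ n] mult_carrier_mat[of _ n n _ n]
  have "(U * A * cadj U) * (U * B * cadj U) = U * (A * (cadj U * (U * (B * cadj U))))"
    using carrier assms by (simp add: square)
  also have "\<dots> = U * (A * B) * cadj U"
    using carrier assms by (simp add: square unitary_cadj_mult_cancel[OF U, of "B * cadj U" n])
  finally show ?thesis .
qed

lemma unitary_conj_commuting:
  assumes U: "U \<in> unitary_group n" and "D \<in> carrier_mat n n" "D * U = U * D"
  shows "U * D * cadj U = D"
proof -
  have "U * D * cadj U = D * (U * cadj U)"
    using assms unitary_groupD(1)[OF U] by (simp flip: assoc_mult_mat[of D n n U n "cadj U" n])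
  then show ?thesis
    using assms unitary_groupD[OF U] by simp
qed

lemma block_unitary_group_conj:
  assumes "l \<in> block_unitary_group ns"
  shows "l * coord_proj (sum_list ns) (block_range ns i) * cadj l = coord_proj (sum_list ns) (block_range ns i)"
  using assms block_unitary_group_subset block_unitary_group_commute
  by (blast intro: unitary_conj_commuting coord_proj_carrier)

definition triple_trace :: "nat \<Rightarrow> nat set \<Rightarrow> nat set \<Rightarrow> nat set \<Rightarrow> 'a :: comm_ring_1 mat \<Rightarrow> 'a" where
  "triple_trace n X Y Z P = trace (coord_proj n X * P * coord_proj n Y * P * coord_proj n Z * P)"

lemma triple_trace_unitary_conj:
  assumes U: "U \<in> unitary_group n" and P: "P \<in> carrier_mat n n"
    and proj: "\<And>W. W \<in> {X, Y, Z} \<Longrightarrow> U * coord_proj n W * cadj U = coord_proj n W"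
  shows "triple_trace n X Y Z (U * P * cadj U) = triple_trace n X Y Z P"
proof -
  have "triple_trace n X Y Z (U * P * cadj U)
      = trace ((U * coord_proj n X * cadj U) * (U * P * cadj U) * (U * coord_proj n Y * cadj U)
          * (U * P * cadj U) * (U * coord_proj n Z * cadj U) * (U * P * cadj U))"
    by (simp only: triple_trace_def proj insertI1 insertI2)
  also have "\<dots> = trace (U * (coord_proj n X * P * coord_proj n Y * P * coord_proj n Z * P) * cadj U)"
    using P by (simp only: unitary_conj_mult[OF U] coord_proj_carrier mult_carrier_mat[of _ n n _ n])
  also have "\<dots> = triple_trace n X Y Z P"
    unfolding triple_trace_def by (rule trace_unitary_conj[OF U]) (use P in simp)
  finally show ?thesis .
qed

lemma triple_trace_of_real:
  assumes "P \<in> carrier_mat n n"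
  shows "triple_trace n X Y Z (map_mat of_real P) = of_real (triple_trace n X Y Z P)"
proof -
  have "map_mat of_real (coord_proj n X * P * coord_proj n Y * P * coord_proj n Z * P)
      = coord_proj n X * map_mat of_real P * coord_proj n Y * map_mat of_real P
          * coord_proj n Z * map_mat of_real P"
    using assms
    by (simp only: of_real_hom.mat_hom_mult[of _ n n _ n] of_real_coord_proj coord_proj_carrier
        mult_carrier_mat[of _ n n _ n])
  moreover have "coord_proj n X * P * coord_proj n Y * P * coord_proj n Z * P \<in> carrier_mat n n"
    using assms by simp
  ultimately show ?thesis
    unfolding triple_trace_def by (metis trace_of_real)
qed

lemma triple_trace_real_on_triple_prod:
  assumes n: "sum_list ns = n" and pq: "p + q = n"
    and "g \<in> triple_prod (block_unitary_group ns) (orthogonal_group n) (block_unitary_group [p, q])"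
  shows "Im (triple_trace n (block_range ns i) (block_range ns j) (block_range ns k)
      (g * coord_proj n {0..<p} * cadj g)) = 0"
proof -
  obtain l M h where g: "g = l * M * h" and l: "l \<in> block_unitary_group ns"
    and M: "M \<in> orthogonal_group n" and h: "h \<in> block_unitary_group [p, q]"
    using assms(3) by (auto simp: triple_prod_def)
  obtain R where M_def: "M = map_mat of_real R" and R: "R \<in> carrier_mat n n"
    using M by (auto simp: orthogonal_group_def)
  have lU: "l \<in> unitary_group n"
    using l block_unitary_group_subset n by blast
  have hU: "h \<in> unitary_group n"
    using h block_unitary_group_subset[of "[p, q]"] pq by auto
  define E :: "complex mat" where "E = coord_proj n {0..<p}"
  have "block_range [p, q] 0 = {0..<p}"
    by (simp add: block_range_def block_start_def)
  then have hE: "h * E * cadj h = E"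
    using block_unitary_group_conj[OF h, of 0] pq by (simp add: E_def)
  note square = assoc_mult_mat[of _ n n _ n _ n] mult_carrier_mat[of _ n n _ n]
  have "g * E * cadj g = l * (M * (h * E * cadj h) * cadj M) * cadj l"
    using unitary_groupD(1)[OF lU] unitary_groupD(1)[OF hU] R
    by (simp add: g M_def E_def cadj_mult[of _ n n _ n] square)
  also have "M * (h * E * cadj h) * cadj M = map_mat of_real (R * coord_proj n {0..<p} * transpose_mat R)"
    using R by (simp only: hE) (simp add: M_def E_def cadj_of_real of_real_hom.mat_hom_mult[of _ n n _ n])
  finally have gE: "g * E * cadj g = l * map_mat of_real (R * coord_proj n {0..<p} * transpose_mat R) * cadj l" .
  have "triple_trace n (block_range ns i) (block_range ns j) (block_range ns k) (g * E * cadj g)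
      = of_real (triple_trace n (block_range ns i) (block_range ns j) (block_range ns k)
          (R * coord_proj n {0..<p} * transpose_mat R))"
    unfolding gE using R block_unitary_group_conj[OF l] n
    by (subst triple_trace_unitary_conj[OF lU]) (auto simp: triple_trace_of_real)
  then show ?thesis
    by (simp add: E_def)
qed

lemma coord_proj_path_index:
  fixes P :: "'a :: comm_ring_1 mat"
  assumes P: "P \<in> carrier_mat n n" and "x < n" "z < n"
  shows "(coord_proj n X * P * coord_proj n Y * P) $$ (x, z)
    = (\<Sum>y<n. if x \<in> X \<and> y \<in> Y then P $$ (x, y) * P $$ (y, z) else 0)"
proof -
  have "(coord_proj n X * P * coord_proj n Y * P) $$ (x, z)
      = (\<Sum>y<n. (coord_proj n X * P * coord_proj n Y) $$ (x, y) * P $$ (y, z))"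
    by (rule index_mult_mat_sum[of _ n n]) (use assms in simp_all)
  also have "\<dots> = (\<Sum>y<n. if x \<in> X \<and> y \<in> Y then P $$ (x, y) * P $$ (y, z) else 0)"
    using assms
    by (intro sum.cong refl)
      (simp del: index_mult_mat add: mult_coord_proj_index[of _ n n] coord_proj_mult_index[of _ n n])
  finally show ?thesis .
qed

lemma triple_trace_sum:
  fixes P :: "'a :: comm_ring_1 mat"
  assumes P: "P \<in> carrier_mat n n"
  shows "triple_trace n X Y Z P = (\<Sum>x<n. \<Sum>y<n. \<Sum>z<n.
    if x \<in> X \<and> y \<in> Y \<and> z \<in> Z then P $$ (x, y) * P $$ (y, z) * P $$ (z, x) else 0)"
proof -
  let ?D = "coord_proj n :: nat set \<Rightarrow> 'a mat"
  have "triple_trace n X Y Z P = (\<Sum>x<n. \<Sum>z<n. (?D X * P * ?D Y * P * ?D Z) $$ (x, z) * P $$ (z, x))"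
    unfolding triple_trace_def by (rule trace_mult[of _ n n]) (use P in simp_all)
  also have "\<dots> = (\<Sum>x<n. \<Sum>z<n. \<Sum>y<n.
      if x \<in> X \<and> y \<in> Y \<and> z \<in> Z then P $$ (x, y) * P $$ (y, z) * P $$ (z, x) else 0)"
  proof (intro sum.cong refl)
    fix x z assume "x \<in> {..<n}" "z \<in> {..<n}"
    then have entry: "(?D X * P * ?D Y * P * ?D Z) $$ (x, z)
        = (if z \<in> Z then \<Sum>y<n. if x \<in> X \<and> y \<in> Y then P $$ (x, y) * P $$ (y, z) else 0 else 0)"
      using P by (simp del: index_mult_mat add: mult_coord_proj_index[of _ n n] coord_proj_path_index)
    show "(?D X * P * ?D Y * P * ?D Z) $$ (x, z) * P $$ (z, x) = (\<Sum>y<n.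
        if x \<in> X \<and> y \<in> Y \<and> z \<in> Z then P $$ (x, y) * P $$ (y, z) * P $$ (z, x) else 0)"
    proof (cases "z \<in> Z")
      case True
      then have "(?D X * P * ?D Y * P * ?D Z) $$ (x, z) * P $$ (z, x)
          = (\<Sum>y<n. (if x \<in> X \<and> y \<in> Y then P $$ (x, y) * P $$ (y, z) else 0) * P $$ (z, x))"
        by (simp add: entry sum_distrib_right)
      also have "\<dots> = (\<Sum>y<n.
          if x \<in> X \<and> y \<in> Y \<and> z \<in> Z then P $$ (x, y) * P $$ (y, z) * P $$ (z, x) else 0)"
        using True by (intro sum.cong refl) simp
      finally show ?thesis .
    qed (simp add: entry)
  qed
  also have "\<dots> = (\<Sum>x<n. \<Sum>y<n. \<Sum>z<n.
      if x \<in> X \<and> y \<in> Y \<and> z \<in> Z then P $$ (x, y) * P $$ (y, z) * P $$ (z, x) else 0)"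
    by (rule sum.cong[OF refl], rule sum.swap)
  finally show ?thesis .
qed

lemma sum3_eq_single:
  fixes f :: "nat \<Rightarrow> nat \<Rightarrow> nat \<Rightarrow> 'a :: comm_monoid_add"
  assumes "a < n" "b < n" "c < n"
    and single: "\<And>x y z. x < n \<Longrightarrow> y < n \<Longrightarrow> z < n \<Longrightarrow> f x y z \<noteq> 0 \<Longrightarrow> x = a \<and> y = b \<and> z = c"
  shows "(\<Sum>x<n. \<Sum>y<n. \<Sum>z<n. f x y z) = f a b c"
proof -
  have "(\<Sum>x<n. \<Sum>y<n. \<Sum>z<n. f x y z)
      = (\<Sum>x<n. \<Sum>y<n. \<Sum>z<n. if z = c then if y = b then if x = a then f a b c else 0 else 0 else 0)"
  proof (intro sum.cong refl)
    fix x y z assume "x \<in> {..<n}" "y \<in> {..<n}" "z \<in> {..<n}"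
    then have "f x y z = 0" if "\<not> (x = a \<and> y = b \<and> z = c)"
      using single that by blast
    then show "f x y z = (if z = c then if y = b then if x = a then f a b c else 0 else 0 else 0)"
      by auto
  qed
  also have "\<dots> = f a b c"
    using assms(1-3) by simp
  finally show ?thesis .
qed

definition cycle_product :: "'a :: comm_semiring_1 mat \<Rightarrow> 'a" where
  "cycle_product R = R $$ (0, 1) * R $$ (1, 2) * R $$ (2, 0)"

section \<open>Embedding a small unitary matrix\<close>

lemma conj_coord_proj_index:
  assumes "A \<in> carrier_mat n m" "i < n" "j < n"
  shows "(A * coord_proj m Y * cadj A) $$ (i, j)
    = (\<Sum>k<m. if k \<in> Y then A $$ (i, k) * cnj (A $$ (j, k)) else 0)"
proof -
  have "(A * coord_proj m Y * cadj A) $$ (i, j) = (\<Sum>k<m. (A * coord_proj m Y) $$ (i, k) * cadj A $$ (k, j))"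
    by (rule index_mult_mat_sum) (use assms in simp_all)
  also have "\<dots> = (\<Sum>k<m. if k \<in> Y then A $$ (i, k) * cnj (A $$ (j, k)) else 0)"
    using assms by (intro sum.cong refl) (simp del: index_mult_mat add: mult_coord_proj_index)
  finally show ?thesis .
qed

definition embed_mat :: "nat \<Rightarrow> nat list \<Rightarrow> complex mat \<Rightarrow> complex mat" where
  "embed_mat n xs u = mat n n (\<lambda>(x, y).
    if x \<in> set xs \<and> y \<in> set xs
    then u $$ (the_inv_into {..<length xs} ((!) xs) x, the_inv_into {..<length xs} ((!) xs) y)
    else of_bool (x = y))"

locale coordinate_embedding =
  fixes n :: nat and xs :: "nat list" and u :: "complex mat"
  assumes distinct: "distinct xs" and bounded: "set xs \<subseteq> {..<n}"
    and unitary: "u \<in> unitary_group (length xs)"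
begin

abbreviation embedded :: "complex mat" where
  "embedded \<equiv> embed_mat n xs u"

lemma embedded_carrier [simp]: "embedded \<in> carrier_mat n n"
  and embedded_dim [simp]: "dim_row embedded = n" "dim_col embedded = n"
  by (simp_all add: embed_mat_def)

lemma nth_less [simp]: "a < length xs \<Longrightarrow> xs ! a < n"
  using bounded nth_mem by blast

lemma embedded_nth:
  assumes "a < length xs" "b < length xs"
  shows "embedded $$ (xs ! a, xs ! b) = u $$ (a, b)"
  using assms distinct by (simp add: embed_mat_def the_inv_into_f_f inj_on_nth)

lemma embedded_outside:
  "x < n \<Longrightarrow> y < n \<Longrightarrow> x \<notin> set xs \<or> y \<notin> set xs \<Longrightarrow> embedded $$ (x, y) = of_bool (x = y)"
  by (auto simp: embed_mat_def)

lemma sum_embedded_support: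
  assumes "\<And>z. z < n \<Longrightarrow> z \<notin> set xs \<Longrightarrow> f z = 0"
  shows "(\<Sum>z<n. f z) = (\<Sum>k<length xs. f (xs ! k))"
proof -
  have "(\<Sum>z<n. f z) = (\<Sum>z\<in>set xs. f z)"
    using assms bounded by (intro sum.mono_neutral_right) auto
  also have "\<dots> = (\<Sum>k<length xs. f (xs ! k))"
    using distinct by (simp add: sum_list_distinct_conv_sum_set[symmetric] sum_list_sum_nth atLeast0LessThan)
  finally show ?thesis .
qed

lemma embedded_rows_nth:
  assumes "a < length xs" "b < length xs"
  shows "(\<Sum>z<n. embedded $$ (xs ! a, z) * cnj (embedded $$ (xs ! b, z))) = of_bool (a = b)"
proof -
  have "(\<Sum>z<n. embedded $$ (xs ! a, z) * cnj (embedded $$ (xs ! b, z)))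
      = (\<Sum>k<length xs. u $$ (a, k) * cnj (u $$ (b, k)))"
    using assms
    by (subst sum_embedded_support) (auto simp: embedded_nth embedded_outside intro!: sum.cong)
  also have "\<dots> = (u * cadj u) $$ (a, b)"
    using assms unitary_groupD(1)[OF unitary]
    by (subst index_mult_mat_sum[of u "length xs" "length xs" _ "length xs"]) (auto intro!: sum.cong)
  also have "\<dots> = of_bool (a = b)"
    using assms unitary_groupD(3)[OF unitary] by simp
  finally show ?thesis .
qed

lemma embedded_rows_outside:
  assumes "x < n" "y < n" "x \<notin> set xs \<or> y \<notin> set xs"
  shows "(\<Sum>z<n. embedded $$ (x, z) * cnj (embedded $$ (y, z))) = of_bool (x = y)"
proof (cases "x \<in> set xs")
  case True
  then have y: "y \<notin> set xs"
    using assms(3) by blast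
  have "(\<Sum>z<n. embedded $$ (x, z) * cnj (embedded $$ (y, z))) = (\<Sum>z<n. if z = y then embedded $$ (x, y) else 0)"
    using assms(1,2) y by (intro sum.cong refl) (auto simp: embedded_outside)
  then show ?thesis
    using assms(1,2) y True by (auto simp: embedded_outside)
next
  case False
  have "(\<Sum>z<n. embedded $$ (x, z) * cnj (embedded $$ (y, z)))
      = (\<Sum>z<n. if z = x then cnj (embedded $$ (y, x)) else 0)"
    using assms(1,2) False by (intro sum.cong refl) (auto simp: embedded_outside)
  then show ?thesis
    using assms(1,2) False by (auto simp: embedded_outside)
qed

lemma embedded_unitary: "embedded \<in> unitary_group n"
proof (rule unitary_groupI)
  show "embedded * cadj embedded = 1\<^sub>m n"
  proof (rule eq_matI)
    fix x y assume "x < dim_row (1\<^sub>m n)" "y < dim_col (1\<^sub>m n)"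
    then have xy: "x < n" "y < n"
      by auto
    have "(embedded * cadj embedded) $$ (x, y) = (\<Sum>z<n. embedded $$ (x, z) * cnj (embedded $$ (y, z)))"
      using xy by (subst index_mult_mat_sum[of _ n n _ n]) (auto intro!: sum.cong)
    also have "\<dots> = of_bool (x = y)"
    proof (cases "x \<in> set xs \<and> y \<in> set xs")
      case True
      then obtain a b where "a < length xs" "b < length xs" "x = xs ! a" "y = xs ! b"
        by (auto simp: in_set_conv_nth)
      then show ?thesis
        using embedded_rows_nth distinct by (simp add: nth_eq_iff_index_eq)
    qed (use xy embedded_rows_outside in blast)
    finally show "(embedded * cadj embedded) $$ (x, y) = 1\<^sub>m n $$ (x, y)"
      using xy by simp
  qed auto
qed simp

lemma embedded_proj_nth:
  assumes "a < length xs" "b < length xs"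
  shows "(embedded * coord_proj n Y * cadj embedded) $$ (xs ! a, xs ! b)
    = (u * coord_proj (length xs) {k. xs ! k \<in> Y} * cadj u) $$ (a, b)"
proof -
  have "(embedded * coord_proj n Y * cadj embedded) $$ (xs ! a, xs ! b)
      = (\<Sum>z<n. if z \<in> Y then embedded $$ (xs ! a, z) * cnj (embedded $$ (xs ! b, z)) else 0)"
    by (rule conj_coord_proj_index[of _ n n]) (use assms in simp_all)
  also have "\<dots> = (\<Sum>k<length xs. if xs ! k \<in> Y then u $$ (a, k) * cnj (u $$ (b, k)) else 0)"
    using assms
    by (subst sum_embedded_support) (auto simp: embedded_nth embedded_outside intro!: sum.cong)
  also have "\<dots> = (u * coord_proj (length xs) {k. xs ! k \<in> Y} * cadj u) $$ (a, b)"
    using assms unitary_groupD(1)[OF unitary]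
    by (subst conj_coord_proj_index[of u "length xs" "length xs"]) simp_all
  finally show ?thesis .
qed

lemma embedded_proj_zero:
  assumes "x < n" "y < n" "x \<noteq> y" "x \<notin> set xs \<or> y \<notin> set xs"
  shows "(embedded * coord_proj n Y * cadj embedded) $$ (x, y) = 0"
proof -
  have "(embedded * coord_proj n Y * cadj embedded) $$ (x, y)
      = (\<Sum>z<n. if z \<in> Y then embedded $$ (x, z) * cnj (embedded $$ (y, z)) else 0)"
    by (rule conj_coord_proj_index[of _ n n]) (use assms in simp_all)
  also have "\<dots> = 0"
    using assms by (intro sum.neutral ballI) (cases "x \<in> set xs"; auto simp: embedded_outside)
  finally show ?thesis .
qed

lemma embedded_triple_trace:
  assumes "3 \<le> length xs"
    and "X1 \<inter> X2 = {}" "X2 \<inter> X3 = {}" "X1 \<inter> X3 = {}"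
    and "set xs \<inter> X1 = {xs ! 0}" "set xs \<inter> X2 = {xs ! 1}" "set xs \<inter> X3 = {xs ! 2}"
  shows "triple_trace n X1 X2 X3 (embedded * coord_proj n Y * cadj embedded)
    = cycle_product (u * coord_proj (length xs) {k. xs ! k \<in> Y} * cadj u)"
proof -
  let ?Q = "embedded * coord_proj n Y * cadj embedded"
  have Q: "?Q \<in> carrier_mat n n"
    by simp
  have idx: "0 < length xs" "1 < length xs" "2 < length xs"
    using assms(1) by linarith+
  note lt = idx[THEN nth_less]
  have "triple_trace n X1 X2 X3 ?Q = ?Q $$ (xs ! 0, xs ! 1) * ?Q $$ (xs ! 1, xs ! 2) * ?Q $$ (xs ! 2, xs ! 0)"
    unfolding triple_trace_sum[OF Q]
  proof (rule trans[OF sum3_eq_single[OF lt]])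
    fix x y z
    assume xyz: "x < n" "y < n" "z < n" and nonzero:
      "(if x \<in> X1 \<and> y \<in> X2 \<and> z \<in> X3 then ?Q $$ (x, y) * ?Q $$ (y, z) * ?Q $$ (z, x) else 0) \<noteq> 0"
    then have blocks: "x \<in> X1" "y \<in> X2" "z \<in> X3"
      and "?Q $$ (x, y) \<noteq> 0" "?Q $$ (y, z) \<noteq> 0"
      by (auto split: if_splits)
    moreover have "x \<noteq> y" "y \<noteq> z"
      using blocks assms(2,3) by auto
    ultimately have "x \<in> set xs" "y \<in> set xs" "z \<in> set xs"
      using embedded_proj_zero[of x y Y] embedded_proj_zero[of y z Y] xyz by blast+
    then show "x = xs ! 0 \<and> y = xs ! 1 \<and> z = xs ! 2"
      using blocks assms(5-7) by blast
  qed (use assms(5-7) in auto)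
  also have "\<dots> = cycle_product (u * coord_proj (length xs) {k. xs ! k \<in> Y} * cadj u)"
    unfolding cycle_product_def by (simp only: embedded_proj_nth idx)
  finally show ?thesis .
qed

end

lemma exists_unitary_triple_trace_not_real:
  assumes "distinct xs" "set xs \<subseteq> {..<n}" "length xs = m" "u \<in> unitary_group m" "3 \<le> m"
    and "X1 \<inter> X2 = {}" "X2 \<inter> X3 = {}" "X1 \<inter> X3 = {}"
    and "set xs \<inter> X1 = {xs ! 0}" "set xs \<inter> X2 = {xs ! 1}" "set xs \<inter> X3 = {xs ! 2}"
    and "Im (cycle_product (u * coord_proj m {k. xs ! k \<in> Y} * cadj u)) \<noteq> 0"
  shows "\<exists>G \<in> unitary_group n. Im (triple_trace n X1 X2 X3 (G * coord_proj n Y * cadj G)) \<noteq> 0"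
proof -
  interpret coordinate_embedding n xs u
    using assms(1-4) by unfold_locales simp_all
  show ?thesis
  proof (rule bexI[OF _ embedded_unitary])
    show "Im (triple_trace n X1 X2 X3 (embedded * coord_proj n Y * cadj embedded)) \<noteq> 0"
      using embedded_triple_trace[of X1 X2 X3 Y] assms(3,5-12) by simp
  qed
qed

section \<open>Two explicit unitary matrices\<close>

lemma mat_unitary_groupI:
  assumes "\<And>i j. i < m \<Longrightarrow> j < m \<Longrightarrow> (\<Sum>k<m. f (i, k) * cnj (f (j, k))) = of_bool (i = j)"
  shows "mat m m f \<in> unitary_group m"
proof (rule unitary_groupI)
  show "mat m m f * cadj (mat m m f) = 1\<^sub>m m"
    by (rule eq_matI) (use assms in \<open>auto simp: scalar_prod_def atLeast0LessThan\<close>)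
qed simp

definition u4 :: "complex mat" where
  "u4 = mat 4 4 (\<lambda>(i, j).
    [[Complex (1/2) 0, 0, Complex (-1/2) (-1/2), Complex (1/2) 0],
     [Complex (1/2) 0, Complex (1/2) 0, Complex 0 (1/2), Complex 0 (1/2)],
     [Complex (1/2) 0, Complex 0 (1/2), Complex (1/2) 0, Complex 0 (-1/2)],
     [Complex (1/2) 0, Complex (-1/2) (-1/2), 0, Complex (-1/2) 0]] ! i ! j)"

definition u5 :: "complex mat" where
  "u5 = mat 5 5 (\<lambda>(i, j).
    [[Complex (-1/2) (-1/2), Complex (1/2) 0, 0, Complex (1/2) 0, 0],
     [Complex 0 (1/2), Complex 0 (1/2), 0, Complex (1/2) 0, Complex (1/2) 0],
     [Complex (1/2) 0, Complex 0 (-1/2), 0, Complex (1/2) 0, Complex 0 (1/2)],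
     [0, Complex (-1/2) 0, 0, Complex (1/2) 0, Complex (-1/2) (-1/2)],
     [0, 0, 1, 0, 0]] ! i ! j)"

lemma sum_lessThan_4: "(\<Sum>k<4. f k) = f 0 + f 1 + f 2 + f (3 :: nat)"
  by (simp add: eval_nat_numeral)

lemma sum_lessThan_5: "(\<Sum>k<5. f k) = f 0 + f 1 + f 2 + f 3 + f (4 :: nat)"
  by (simp add: eval_nat_numeral)

lemma u4_unitary: "u4 \<in> unitary_group 4"
  unfolding u4_def
proof (rule mat_unitary_groupI, goal_cases)
  case (1 i j)
  then have "i \<in> {0, 1, 2, 3}" "j \<in> {0, 1, 2, 3}"
    by auto
  then show ?case
    by (auto simp: sum_lessThan_4 complex_eq_iff)
qed

lemma u5_unitary: "u5 \<in> unitary_group 5"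
  unfolding u5_def
proof (rule mat_unitary_groupI, goal_cases)
  case (1 i j)
  then have "i \<in> {0, 1, 2, 3, 4}" "j \<in> {0, 1, 2, 3, 4}"
    by auto
  then show ?case
    by (auto simp: sum_lessThan_5 complex_eq_iff)
qed

lemma u4_cycle_product:
  assumes "0 \<in> Y" "1 \<in> Y" "2 \<notin> Y" "3 \<notin> Y"
  shows "Im (cycle_product (u4 * coord_proj 4 Y * cadj u4)) \<noteq> 0"
proof -
  have "u4 \<in> carrier_mat 4 4"
    by (simp add: u4_def)
  then show ?thesis
    using assms
    by (simp del: index_mult_mat add: cycle_product_def conj_coord_proj_index[of u4 4 4] sum_lessThan_4)
      (simp add: u4_def)
qed

lemma u5_cycle_product:
  assumes "0 \<in> Y \<longleftrightarrow> b" "1 \<in> Y \<longleftrightarrow> b" "2 \<in> Y \<longleftrightarrow> b" "3 \<in> Y \<longleftrightarrow> \<not> b" "4 \<in> Y \<longleftrightarrow> \<not> b"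
  shows "Im (cycle_product (u5 * coord_proj 5 Y * cadj u5)) \<noteq> 0"
proof -
  have "u5 \<in> carrier_mat 5 5"
    by (simp add: u5_def)
  then show ?thesis
    using assms
    by (cases b)
      (simp_all del: index_mult_mat add: cycle_product_def conj_coord_proj_index[of u5 5 5] sum_lessThan_5,
        simp_all add: u5_def)
qed

section \<open>Choosing the coordinates\<close>

lemma exists_unitary_triple_trace_not_real_below:
  assumes "2 \<le> p" "p \<le> a1" "a1 < a2" "a2 < a3" "a3 < a4" "a4 \<le> n"
  shows "\<exists>G \<in> unitary_group n. Im (triple_trace n {a1..<a2} {a2..<a3} {a3..<a4}
    (G * coord_proj n {0..<p} * cadj G)) \<noteq> 0"
proof (rule exists_unitary_triple_trace_not_real[where xs = "[a1, a2, a3, 0, 1]" and u = u5 and m = 5])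
  show "Im (cycle_product (u5 * coord_proj 5 {k. [a1, a2, a3, 0, 1] ! k \<in> {0..<p}} * cadj u5)) \<noteq> 0"
    by (rule u5_cycle_product[where b = False]) (use assms in simp_all)
qed (use assms u5_unitary in auto)

lemma exists_unitary_triple_trace_not_real_above:
  assumes "0 < a1" "a1 < a2" "a2 < a3" "a3 \<le> p" "p + 2 \<le> n"
  shows "\<exists>G \<in> unitary_group n. Im (triple_trace n {0..<a1} {a1..<a2} {a2..<a3}
    (G * coord_proj n {0..<p} * cadj G)) \<noteq> 0"
proof (rule exists_unitary_triple_trace_not_real[where xs = "[0, a1, a2, n - 2, n - 1]" and u = u5 and m = 5])
  show "Im (cycle_product (u5 * coord_proj 5 {k. [0, a1, a2, n - 2, n - 1] ! k \<in> {0..<p}} * cadj u5)) \<noteq> 0"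
    by (rule u5_cycle_product[where b = True]) (use assms in simp_all)
qed (use assms u5_unitary in auto)

lemma exists_unitary_triple_trace_not_real_across:
  assumes "0 < a1" "a1 < a2" "a2 < c" "a1 < p" "p < c" "c < n"
  shows "\<exists>G \<in> unitary_group n. Im (triple_trace n {0..<a1} {a1..<a2} {c..<n}
    (G * coord_proj n {0..<p} * cadj G)) \<noteq> 0"
proof (rule exists_unitary_triple_trace_not_real[where xs = "[0, a1, n - 1, c - 1]" and u = u4 and m = 4])
  show "Im (cycle_product (u4 * coord_proj 4 {k. [0, a1, n - 1, c - 1] ! k \<in> {0..<p}} * cadj u4)) \<noteq> 0"
    by (rule u4_cycle_product) (use assms in simp_all)
qed (use assms u4_unitary in auto)

lemma exists_unitary_block_triple_trace_not_real:
  assumes pos: "\<forall>i < length ns. ns ! i > 0" and n: "sum_list ns = n" and len: "4 \<le> length ns"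
    and pq: "p + q = n" "2 \<le> p" "2 \<le> q"
  obtains i j k G where "G \<in> unitary_group n"
    "Im (triple_trace n (block_range ns i) (block_range ns j) (block_range ns k)
      (G * coord_proj n {0..<p} * cadj G)) \<noteq> 0"
proof -
  define K where "K = length ns - 1"
  define a where "a = block_start ns"
  have K: "3 \<le> K" "Suc K = length ns"
    using len by (auto simp: K_def)
  have lt: "a i < a j" if "i < j" "j \<le> Suc K" for i j
    using block_start_strict_mono[OF pos] that K by (simp add: a_def)
  have le: "a i \<le> a j" if "i \<le> j" for i j
    using block_start_mono that by (simp add: a_def)
  have ends: "a 0 = 0" "a (Suc K) = n"
    using K n by (simp_all add: a_def block_start_length)
  have bounds: "0 < a 1" "a 1 < a 2" "a 2 < a 3" "a 3 < a 4" "a 4 \<le> n" "a 2 < a K" "a 3 \<le> a K" "a K < n"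
    using lt[of 0 1] lt[of 1 2] lt[of 2 3] lt[of 3 4] le[of 4 "Suc K"] lt[of 2 K] le[of 3 K]
      lt[of K "Suc K"] K ends
    by simp_all
  have ranges: "block_range ns 0 = {0..<a 1}" "block_range ns 1 = {a 1..<a 2}"
    "block_range ns 2 = {a 2..<a 3}" "block_range ns 3 = {a 3..<a 4}" "block_range ns K = {a K..<n}"
    using ends by (simp_all add: block_range_def a_def eval_nat_numeral)
  consider "p \<le> a 1" | "a K \<le> p" | "a 1 < p" "p < a K"
    by linarith
  then show thesis
  proof cases
    case 1
    then obtain G where "G \<in> unitary_group n" "Im (triple_trace n (block_range ns 1) (block_range ns 2)
        (block_range ns 3) (G * coord_proj n {0..<p} * cadj G)) \<noteq> 0"
      unfolding ranges
      using exists_unitary_triple_trace_not_real_below[of p "a 1" "a 2" "a 3" "a 4" n] bounds pq by auto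
    then show thesis
      by (rule that)
  next
    case 2
    then obtain G where "G \<in> unitary_group n" "Im (triple_trace n (block_range ns 0) (block_range ns 1)
        (block_range ns 2) (G * coord_proj n {0..<p} * cadj G)) \<noteq> 0"
      unfolding ranges
      using exists_unitary_triple_trace_not_real_above[of "a 1" "a 2" "a 3" p n] bounds pq by auto
    then show thesis
      by (rule that)
  next
    case 3
    then obtain G where "G \<in> unitary_group n" "Im (triple_trace n (block_range ns 0) (block_range ns 1)
        (block_range ns K) (G * coord_proj n {0..<p} * cadj G)) \<noteq> 0"
      unfolding ranges
      using exists_unitary_triple_trace_not_real_across[of "a 1" "a 2" "a K" p n] bounds pq by auto
    then show thesis
      by (rule that)
  qed
qed

theorem proposition6p7:
  fixes ns :: "nat list" and n p q :: nat
  assumes "\<forall>i < length ns. ns ! i > 0"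
    and "sum_list ns = n"
    and "p > 0" and "q > 0" and "p + q = n"
    and "min p q \<ge> 3"
    and "length ns \<ge> 4"
  shows "triple_prod (block_unitary_group ns) (orthogonal_group n) (block_unitary_group [p, q])
           \<subset> unitary_group n"
proof -
  have "triple_prod (block_unitary_group ns) (orthogonal_group n) (block_unitary_group [p, q])
      \<subseteq> unitary_group n"
    using assms(2,5) block_unitary_group_subset[of ns] block_unitary_group_subset[of "[p, q]"]
      orthogonal_group_subset[of n]
    by (intro triple_prod_subset) auto
  moreover obtain i j k G where "G \<in> unitary_group n"
    and "Im (triple_trace n (block_range ns i) (block_range ns j) (block_range ns k)
      (G * coord_proj n {0..<p} * cadj G)) \<noteq> 0"
    using assms(1,2,7,5) by (rule exists_unitary_block_triple_trace_not_real) (use assms(6) in auto)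
  moreover have "G \<notin> triple_prod (block_unitary_group ns) (orthogonal_group n) (block_unitary_group [p, q])"
    using triple_trace_real_on_triple_prod[OF assms(2,5)] calculation(3) by blast
  ultimately show ?thesis
    by blast
qed

end
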